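(* Let $\ell:K(H\times\mathrm{Id})\to HM$ be an abstract GSOS rule with $\ell$-interpretation $b:KC\to C$, and let $k=c^{-1}\cdot Hb^\sharp:HMC\to C$. Then $(C,k)$ is a completely iterative algebra for the functor $HM$.
   Context: Let $\mathcal A$ be a category with binary products and coproducts, let $H:\mathcal A\to\mathcal A$ be a functor with a terminal coalgebra $c:C\to HC$ (so $c$ is an isomorphism by Lambek's lemma), and let $K:\mathcal A\to\mathcal A$ be a functor such that every object $X$ has a free $K$-algebra $\varphi_X:KMX\to MX$ with universal morphism $\eta_X:X\to MX$. Then $(M,\eta,\mu)$ is the free monad on $K$, and $\kappa=\varphi\cdot K\eta:K\to M$. For a $K$-algebra $a:KA\to A$ let $a^\sharp:MA\to A$ be the unique $K$-algebra homomorphism with $a^\sharp\cdot\eta_A=\mathrm{id}_A$; it is an Eilenberg–Moore algebra for $M$. An abstract GSOS rule is a natural transformation $\ell:K(H\times\mathrm{Id})\to HM$; its $\ell$-interpretation is the unique morphism $b:KC\to C$ with $c\cdot b=Hb^\sharp\cdot\ell_C\cdot K\langle c,\mathrm{id}_C\rangle$. For an endofunctor $G$, a flat equation morphism in an object $A$ is a morphism $e:X\to GX+A$; a $G$-algebra $a:GA\to A$ is a completely iterative algebra (cia) if every flat equation morphism $e:X\to GX+A$ has a unique solution, i.e. a unique $e^\dagger:X\to A$ with $e^\dagger=[a,\mathrm{id}_A]\cdot(Ge^\dagger+\mathrm{id}_A)\cdot e$. *)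

theory Defs
  imports Main
begin

record ('o, 'm) category =
  Obj  :: "'o set"
  Arr  :: "'m set"
  Dom  :: "'m \<Rightarrow> 'o"
  Cod  :: "'m \<Rightarrow> 'o"
  Ide  :: "'o \<Rightarrow> 'm"
  Comp :: "'m \<Rightarrow> 'm \<Rightarrow> 'm"   \<comment> \<open>Comp g f = g \<cdot> f (first f, then g)\<close>

definition hom :: "('o, 'm) category \<Rightarrow> 'o \<Rightarrow> 'o \<Rightarrow> 'm set" where
  "hom A X Y = {f \<in> Arr A. Dom A f = X \<and> Cod A f = Y}"

definition is_category :: "('o, 'm) category \<Rightarrow> bool" where
  "is_category A \<longleftrightarrow>
     (\<forall>f \<in> Arr A. Dom A f \<in> Obj A \<and> Cod A f \<in> Obj A) \<and>
     (\<forall>X \<in> Obj A. Ide A X \<in> hom A X X) \<and>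
     (\<forall>X \<in> Obj A. \<forall>Y \<in> Obj A. \<forall>Z \<in> Obj A. \<forall>f \<in> hom A X Y. \<forall>g \<in> hom A Y Z.
        Comp A g f \<in> hom A X Z) \<and>
     (\<forall>f \<in> Arr A. Comp A f (Ide A (Dom A f)) = f \<and> Comp A (Ide A (Cod A f)) f = f) \<and>
     (\<forall>f \<in> Arr A. \<forall>g \<in> Arr A. \<forall>h \<in> Arr A. Cod A f = Dom A g \<longrightarrow> Cod A g = Dom A h \<longrightarrow>
        Comp A h (Comp A g f) = Comp A (Comp A h g) f)"

record ('o, 'm) endofunctor =
  FObj :: "'o \<Rightarrow> 'o"
  FArr :: "'m \<Rightarrow> 'm"

definition is_endofunctor :: "('o, 'm) category \<Rightarrow> ('o, 'm) endofunctor \<Rightarrow> bool" where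
  "is_endofunctor A F \<longleftrightarrow>
     (\<forall>X \<in> Obj A. FObj F X \<in> Obj A) \<and>
     (\<forall>X \<in> Obj A. \<forall>Y \<in> Obj A. \<forall>f \<in> hom A X Y. FArr F f \<in> hom A (FObj F X) (FObj F Y)) \<and>
     (\<forall>X \<in> Obj A. FArr F (Ide A X) = Ide A (FObj F X)) \<and>
     (\<forall>f \<in> Arr A. \<forall>g \<in> Arr A. Cod A f = Dom A g \<longrightarrow>
        FArr F (Comp A g f) = Comp A (FArr F g) (FArr F f))"

definition has_binary_products ::
  "('o, 'm) category \<Rightarrow> ('o \<Rightarrow> 'o \<Rightarrow> 'o) \<Rightarrow> ('o \<Rightarrow> 'o \<Rightarrow> 'm) \<Rightarrow> ('o \<Rightarrow> 'o \<Rightarrow> 'm) \<Rightarrow> bool" where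
  "has_binary_products A P p1 p2 \<longleftrightarrow>
     (\<forall>X \<in> Obj A. \<forall>Y \<in> Obj A.
        P X Y \<in> Obj A \<and> p1 X Y \<in> hom A (P X Y) X \<and> p2 X Y \<in> hom A (P X Y) Y \<and>
        (\<forall>Z \<in> Obj A. \<forall>f \<in> hom A Z X. \<forall>g \<in> hom A Z Y.
           (\<exists>!h. h \<in> hom A Z (P X Y) \<and> Comp A (p1 X Y) h = f \<and> Comp A (p2 X Y) h = g)))"

definition tuple ::
  "('o, 'm) category \<Rightarrow> ('o \<Rightarrow> 'o \<Rightarrow> 'o) \<Rightarrow> ('o \<Rightarrow> 'o \<Rightarrow> 'm) \<Rightarrow> ('o \<Rightarrow> 'o \<Rightarrow> 'm) \<Rightarrow> 'm \<Rightarrow> 'm \<Rightarrow> 'm" where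
  "tuple A P p1 p2 f g =
     (THE h. h \<in> hom A (Dom A f) (P (Cod A f) (Cod A g)) \<and>
             Comp A (p1 (Cod A f) (Cod A g)) h = f \<and> Comp A (p2 (Cod A f) (Cod A g)) h = g)"

definition prod_arr ::
  "('o, 'm) category \<Rightarrow> ('o \<Rightarrow> 'o \<Rightarrow> 'o) \<Rightarrow> ('o \<Rightarrow> 'o \<Rightarrow> 'm) \<Rightarrow> ('o \<Rightarrow> 'o \<Rightarrow> 'm) \<Rightarrow> 'm \<Rightarrow> 'm \<Rightarrow> 'm" where
  "prod_arr A P p1 p2 f g =
     tuple A P p1 p2 (Comp A f (p1 (Dom A f) (Dom A g))) (Comp A g (p2 (Dom A f) (Dom A g)))"

definition has_binary_coproducts ::
  "('o, 'm) category \<Rightarrow> ('o \<Rightarrow> 'o \<Rightarrow> 'o) \<Rightarrow> ('o \<Rightarrow> 'o \<Rightarrow> 'm) \<Rightarrow> ('o \<Rightarrow> 'o \<Rightarrow> 'm) \<Rightarrow> bool" where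
  "has_binary_coproducts A S i1 i2 \<longleftrightarrow>
     (\<forall>X \<in> Obj A. \<forall>Y \<in> Obj A.
        S X Y \<in> Obj A \<and> i1 X Y \<in> hom A X (S X Y) \<and> i2 X Y \<in> hom A Y (S X Y) \<and>
        (\<forall>Z \<in> Obj A. \<forall>f \<in> hom A X Z. \<forall>g \<in> hom A Y Z.
           (\<exists>!h. h \<in> hom A (S X Y) Z \<and> Comp A h (i1 X Y) = f \<and> Comp A h (i2 X Y) = g)))"

definition cotuple ::
  "('o, 'm) category \<Rightarrow> ('o \<Rightarrow> 'o \<Rightarrow> 'o) \<Rightarrow> ('o \<Rightarrow> 'o \<Rightarrow> 'm) \<Rightarrow> ('o \<Rightarrow> 'o \<Rightarrow> 'm) \<Rightarrow> 'm \<Rightarrow> 'm \<Rightarrow> 'm" where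
  "cotuple A S i1 i2 f g =
     (THE h. h \<in> hom A (S (Dom A f) (Dom A g)) (Cod A f) \<and>
             Comp A h (i1 (Dom A f) (Dom A g)) = f \<and> Comp A h (i2 (Dom A f) (Dom A g)) = g)"

definition coprod_arr ::
  "('o, 'm) category \<Rightarrow> ('o \<Rightarrow> 'o \<Rightarrow> 'o) \<Rightarrow> ('o \<Rightarrow> 'o \<Rightarrow> 'm) \<Rightarrow> ('o \<Rightarrow> 'o \<Rightarrow> 'm) \<Rightarrow> 'm \<Rightarrow> 'm \<Rightarrow> 'm" where
  "coprod_arr A S i1 i2 f g =
     cotuple A S i1 i2 (Comp A (i1 (Cod A f) (Cod A g)) f) (Comp A (i2 (Cod A f) (Cod A g)) g)"

definition is_terminal_coalgebra ::
  "('o, 'm) category \<Rightarrow> ('o, 'm) endofunctor \<Rightarrow> 'o \<Rightarrow> 'm \<Rightarrow> bool" where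
  "is_terminal_coalgebra A H C c \<longleftrightarrow>
     C \<in> Obj A \<and> c \<in> hom A C (FObj H C) \<and>
     (\<forall>X \<in> Obj A. \<forall>e \<in> hom A X (FObj H X).
        (\<exists>!h. h \<in> hom A X C \<and> Comp A c h = Comp A (FArr H h) e))"

text \<open>Inverse of a morphism (used for c^-1; c is an isomorphism by Lambek's lemma).\<close>
definition inverse_arr :: "('o, 'm) category \<Rightarrow> 'm \<Rightarrow> 'm" where
  "inverse_arr A f =
     (THE g. g \<in> hom A (Cod A f) (Dom A f) \<and>
             Comp A g f = Ide A (Dom A f) \<and> Comp A f g = Ide A (Cod A f))"

definition has_free_algebras ::
  "('o, 'm) category \<Rightarrow> ('o, 'm) endofunctor \<Rightarrow> ('o \<Rightarrow> 'o) \<Rightarrow> ('o \<Rightarrow> 'm) \<Rightarrow> ('o \<Rightarrow> 'm) \<Rightarrow> bool" where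
  "has_free_algebras A K M phi eta \<longleftrightarrow>
     (\<forall>X \<in> Obj A.
        M X \<in> Obj A \<and> phi X \<in> hom A (FObj K (M X)) (M X) \<and> eta X \<in> hom A X (M X) \<and>
        (\<forall>B \<in> Obj A. \<forall>a \<in> hom A (FObj K B) B. \<forall>f \<in> hom A X B.
           (\<exists>!h. h \<in> hom A (M X) B \<and> Comp A h (phi X) = Comp A a (FArr K h) \<and>
                 Comp A h (eta X) = f)))"

definition free_arr ::
  "('o, 'm) category \<Rightarrow> ('o, 'm) endofunctor \<Rightarrow> ('o \<Rightarrow> 'o) \<Rightarrow> ('o \<Rightarrow> 'm) \<Rightarrow> ('o \<Rightarrow> 'm) \<Rightarrow> 'm \<Rightarrow> 'm" where
  "free_arr A K M phi eta f =
     (THE h. h \<in> hom A (M (Dom A f)) (M (Cod A f)) \<and>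
             Comp A h (phi (Dom A f)) = Comp A (phi (Cod A f)) (FArr K h) \<and>
             Comp A h (eta (Dom A f)) = Comp A (eta (Cod A f)) f)"

definition sharp ::
  "('o, 'm) category \<Rightarrow> ('o, 'm) endofunctor \<Rightarrow> ('o \<Rightarrow> 'o) \<Rightarrow> ('o \<Rightarrow> 'm) \<Rightarrow> ('o \<Rightarrow> 'm) \<Rightarrow> 'm \<Rightarrow> 'm" where
  "sharp A K M phi eta a =
     (THE h. h \<in> hom A (M (Cod A a)) (Cod A a) \<and>
             Comp A h (phi (Cod A a)) = Comp A a (FArr K h) \<and>
             Comp A h (eta (Cod A a)) = Ide A (Cod A a))"

definition HM_functor ::
  "('o, 'm) category \<Rightarrow> ('o, 'm) endofunctor \<Rightarrow> ('o, 'm) endofunctor \<Rightarrow> ('o \<Rightarrow> 'o) \<Rightarrow> ('o \<Rightarrow> 'm) \<Rightarrow> ('o \<Rightarrow> 'm)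
   \<Rightarrow> ('o, 'm) endofunctor" where
  "HM_functor A H K M phi eta =
     \<lparr> FObj = (\<lambda>X. FObj H (M X)), FArr = (\<lambda>f. FArr H (free_arr A K M phi eta f)) \<rparr>"

definition is_GSOS_rule ::
  "('o, 'm) category \<Rightarrow> ('o \<Rightarrow> 'o \<Rightarrow> 'o) \<Rightarrow> ('o \<Rightarrow> 'o \<Rightarrow> 'm) \<Rightarrow> ('o \<Rightarrow> 'o \<Rightarrow> 'm)
   \<Rightarrow> ('o, 'm) endofunctor \<Rightarrow> ('o, 'm) endofunctor \<Rightarrow> ('o \<Rightarrow> 'o) \<Rightarrow> ('o \<Rightarrow> 'm) \<Rightarrow> ('o \<Rightarrow> 'm)
   \<Rightarrow> ('o \<Rightarrow> 'm) \<Rightarrow> bool" where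
  "is_GSOS_rule A P p1 p2 H K M phi eta l \<longleftrightarrow>
     (\<forall>X \<in> Obj A. l X \<in> hom A (FObj K (P (FObj H X) X)) (FObj H (M X))) \<and>
     (\<forall>X \<in> Obj A. \<forall>Y \<in> Obj A. \<forall>f \<in> hom A X Y.
        Comp A (FArr H (free_arr A K M phi eta f)) (l X) =
        Comp A (l Y) (FArr K (prod_arr A P p1 p2 (FArr H f) f)))"

definition is_l_interpretation ::
  "('o, 'm) category \<Rightarrow> ('o \<Rightarrow> 'o \<Rightarrow> 'o) \<Rightarrow> ('o \<Rightarrow> 'o \<Rightarrow> 'm) \<Rightarrow> ('o \<Rightarrow> 'o \<Rightarrow> 'm)
   \<Rightarrow> ('o, 'm) endofunctor \<Rightarrow> ('o, 'm) endofunctor \<Rightarrow> ('o \<Rightarrow> 'o) \<Rightarrow> ('o \<Rightarrow> 'm) \<Rightarrow> ('o \<Rightarrow> 'm)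
   \<Rightarrow> ('o \<Rightarrow> 'm) \<Rightarrow> 'o \<Rightarrow> 'm \<Rightarrow> 'm \<Rightarrow> bool" where
  "is_l_interpretation A P p1 p2 H K M phi eta l C c b \<longleftrightarrow>
     b \<in> hom A (FObj K C) C \<and>
     (\<forall>b' \<in> hom A (FObj K C) C.
        Comp A c b' =
        Comp A (FArr H (sharp A K M phi eta b'))
          (Comp A (l C) (FArr K (tuple A P p1 p2 c (Ide A C))))
        \<longleftrightarrow> b' = b)"

definition is_cia ::
  "('o, 'm) category \<Rightarrow> ('o \<Rightarrow> 'o \<Rightarrow> 'o) \<Rightarrow> ('o \<Rightarrow> 'o \<Rightarrow> 'm) \<Rightarrow> ('o \<Rightarrow> 'o \<Rightarrow> 'm)
   \<Rightarrow> ('o, 'm) endofunctor \<Rightarrow> 'o \<Rightarrow> 'm \<Rightarrow> bool" where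
  "is_cia A S i1 i2 G B a \<longleftrightarrow>
     B \<in> Obj A \<and> a \<in> hom A (FObj G B) B \<and>
     (\<forall>X \<in> Obj A. \<forall>e \<in> hom A X (S (FObj G X) B).
        (\<exists>!s. s \<in> hom A X B \<and>
              s = Comp A (cotuple A S i1 i2 a (Ide A B))
                    (Comp A (coprod_arr A S i1 i2 (FArr G s) (Ide A B)) e)))"

end

theory Submission
  imports Defs
begin

text \<open>Via the rule, every \<open>d : Z \<rightarrow> HMZ\<close> extends to an \<open>HM\<close>-coalgebra \<open>D\<close> on \<open>MZ\<close>, and whenever
  \<open>f : Z \<rightarrow> C\<close> satisfies \<open>c \<cdot> f = H(b\<^sup>\<sharp> \<cdot> M f) \<cdot> d\<close>, the map \<open>b\<^sup>\<sharp> \<cdot> M f\<close> is a coalgebra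
  homomorphism from \<open>D\<close> to the terminal coalgebra. A flat equation \<open>e : X \<rightarrow> HMX + C\<close> becomes such
  a \<open>d\<close> on \<open>Y = X + C\<close> by letting \<open>C\<close> act through \<open>c\<close>. The unique coalgebra homomorphism
  \<open>h : MY \<rightarrow> C\<close> out of the extension then satisfies \<open>h = b\<^sup>\<sharp> \<cdot> M(h\<eta>)\<close> and \<open>h\<eta>inr = id\<close>, so \<open>h\<eta>inl\<close>
  solves \<open>e\<close>; conversely for any solution \<open>s\<close> the map \<open>b\<^sup>\<sharp> \<cdot> M[s, id]\<close> is such a homomorphism, hence
  equals \<open>h\<close>, and \<open>s = h\<eta>inl\<close>.\<close>

locale category =
  fixes Ac :: "('o, 'm) category"
  assumes is_category: "is_category Ac"
begin

abbreviation comp (infixr "\<cdot>" 55) where "g \<cdot> f \<equiv> Comp Ac g f"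
abbreviation "Ar f \<equiv> f \<in> Arr Ac"
abbreviation "Ob X \<equiv> X \<in> Obj Ac"
abbreviation "dm \<equiv> Dom Ac"
abbreviation "cd \<equiv> Cod Ac"
abbreviation "ide \<equiv> Ide Ac"

lemma hom_iff: "f \<in> hom Ac X Y \<longleftrightarrow> Ar f \<and> dm f = X \<and> cd f = Y"
  by (simp add: hom_def)

lemma dom_obj [simp]: "Ar f \<Longrightarrow> Ob (dm f)"
  and cod_obj [simp]: "Ar f \<Longrightarrow> Ob (cd f)"
  using is_category by (simp_all add: is_category_def)

lemma ide_hom: "Ob X \<Longrightarrow> ide X \<in> hom Ac X X"
  using is_category by (simp add: is_category_def)

lemma ide_arr [simp]: "Ob X \<Longrightarrow> Ar (ide X)"
  and ide_dom [simp]: "Ob X \<Longrightarrow> dm (ide X) = X"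
  and ide_cod [simp]: "Ob X \<Longrightarrow> cd (ide X) = X"
  using ide_hom hom_iff by blast+

lemma comp_hom:
  assumes "Ar f" "Ar g" "cd f = dm g"
  shows "g \<cdot> f \<in> hom Ac (dm f) (cd g)"
proof -
  have "f \<in> hom Ac (dm f) (cd f)" "g \<in> hom Ac (cd f) (cd g)"
    using assms by (auto simp: hom_iff)
  then show ?thesis
    using is_category assms unfolding is_category_def by (metis dom_obj cod_obj)
qed

lemma comp_arr [simp]: "Ar f \<Longrightarrow> Ar g \<Longrightarrow> cd f = dm g \<Longrightarrow> Ar (g \<cdot> f)"
  and comp_dom [simp]: "Ar f \<Longrightarrow> Ar g \<Longrightarrow> cd f = dm g \<Longrightarrow> dm (g \<cdot> f) = dm f"
  and comp_cod [simp]: "Ar f \<Longrightarrow> Ar g \<Longrightarrow> cd f = dm g \<Longrightarrow> cd (g \<cdot> f) = cd g"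
  using comp_hom hom_iff by blast+

lemma comp_ide_right [simp]: "Ar f \<Longrightarrow> dm f = X \<Longrightarrow> f \<cdot> ide X = f"
  and comp_ide_left [simp]: "Ar f \<Longrightarrow> cd f = X \<Longrightarrow> ide X \<cdot> f = f"
  using is_category by (auto simp: is_category_def)

lemma comp_assoc [simp]:
  "Ar f \<Longrightarrow> Ar g \<Longrightarrow> Ar h \<Longrightarrow> cd f = dm g \<Longrightarrow> cd g = dm h \<Longrightarrow> (h \<cdot> g) \<cdot> f = h \<cdot> g \<cdot> f"
  using is_category unfolding is_category_def by metis

text \<open>Since the simplifier right-associates composites, an equation \<open>g \<cdot> f = k\<close> is
  mostly used in the form below.\<close>
lemma comp_reassoc:
  assumes "g \<cdot> f = k" "Ar f" "Ar g" "cd f = dm g" "Ar x" "cd x = dm f"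
  shows "g \<cdot> f \<cdot> x = k \<cdot> x"
  using assms comp_assoc[of x f g] by simp

end

locale endofunctor = category +
  fixes F
  assumes is_endofunctor: "is_endofunctor Ac F"
begin

lemma obj_map [simp]: "Ob X \<Longrightarrow> Ob (FObj F X)"
  using is_endofunctor by (simp add: is_endofunctor_def)

lemma hom_map: assumes "Ar f" shows "FArr F f \<in> hom Ac (FObj F (dm f)) (FObj F (cd f))"
proof -
  have "f \<in> hom Ac (dm f) (cd f)" using assms by (simp add: hom_iff)
  then show ?thesis using is_endofunctor assms unfolding is_endofunctor_def by simp
qed

lemma arr_map [simp]: "Ar f \<Longrightarrow> Ar (FArr F f)"
  and dom_map [simp]: "Ar f \<Longrightarrow> dm (FArr F f) = FObj F (dm f)"
  and cod_map [simp]: "Ar f \<Longrightarrow> cd (FArr F f) = FObj F (cd f)"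
  using hom_map hom_iff by blast+

lemma map_ide [simp]: "Ob X \<Longrightarrow> FArr F (ide X) = ide (FObj F X)"
  and map_comp [simp]: "Ar f \<Longrightarrow> Ar g \<Longrightarrow> cd f = dm g \<Longrightarrow> FArr F (g \<cdot> f) = FArr F g \<cdot> FArr F f"
  using is_endofunctor by (simp_all add: is_endofunctor_def)

lemma map_comp_reassoc:
  assumes "g \<cdot> f = k" "Ar f" "Ar g" "cd f = dm g" "Ar x" "cd x = FObj F (dm f)"
  shows "FArr F g \<cdot> FArr F f \<cdot> x = FArr F k \<cdot> x"
  by (rule comp_reassoc) (use assms map_comp[of f g, symmetric] in simp_all)

end

locale binary_products = category +
  fixes P and p1 p2
  assumes has_binary_products: "has_binary_products Ac P p1 p2"
begin

abbreviation "tup \<equiv> tuple Ac P p1 p2"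

lemma product_cone:
  assumes "Ob X" "Ob Y"
  shows "Ob (P X Y)" "p1 X Y \<in> hom Ac (P X Y) X" "p2 X Y \<in> hom Ac (P X Y) Y"
  using has_binary_products assms by (simp_all add: has_binary_products_def)

lemma P_obj [simp]: "Ob X \<Longrightarrow> Ob Y \<Longrightarrow> Ob (P X Y)"
  and p1_arr [simp]: "Ob X \<Longrightarrow> Ob Y \<Longrightarrow> Ar (p1 X Y)"
  and p1_dom [simp]: "Ob X \<Longrightarrow> Ob Y \<Longrightarrow> dm (p1 X Y) = P X Y"
  and p1_cod [simp]: "Ob X \<Longrightarrow> Ob Y \<Longrightarrow> cd (p1 X Y) = X"
  and p2_arr [simp]: "Ob X \<Longrightarrow> Ob Y \<Longrightarrow> Ar (p2 X Y)"
  and p2_dom [simp]: "Ob X \<Longrightarrow> Ob Y \<Longrightarrow> dm (p2 X Y) = P X Y"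
  and p2_cod [simp]: "Ob X \<Longrightarrow> Ob Y \<Longrightarrow> cd (p2 X Y) = Y"
  using product_cone hom_iff by blast+

lemma tuple_ex1:
  assumes "Ar f" "Ar g" "dm f = dm g"
  shows "\<exists>!h. h \<in> hom Ac (dm f) (P (cd f) (cd g)) \<and> p1 (cd f) (cd g) \<cdot> h = f \<and> p2 (cd f) (cd g) \<cdot> h = g"
proof -
  have "f \<in> hom Ac (dm f) (cd f)" "g \<in> hom Ac (dm f) (cd g)"
    using assms by (auto simp: hom_iff)
  then show ?thesis
    using has_binary_products assms unfolding has_binary_products_def by simp
qed

lemma tuple_prop:
  assumes "Ar f" "Ar g" "dm f = dm g"
  shows "tup f g \<in> hom Ac (dm f) (P (cd f) (cd g)) \<and> p1 (cd f) (cd g) \<cdot> tup f g = f \<and> p2 (cd f) (cd g) \<cdot> tup f g = g"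
  unfolding tuple_def by (rule theI'[OF tuple_ex1[OF assms]])

lemma tuple_arr [simp]: "Ar f \<Longrightarrow> Ar g \<Longrightarrow> dm f = dm g \<Longrightarrow> Ar (tup f g)"
  and tuple_dom [simp]: "Ar f \<Longrightarrow> Ar g \<Longrightarrow> dm f = dm g \<Longrightarrow> dm (tup f g) = dm f"
  and tuple_cod [simp]: "Ar f \<Longrightarrow> Ar g \<Longrightarrow> dm f = dm g \<Longrightarrow> cd (tup f g) = P (cd f) (cd g)"
  using tuple_prop hom_iff by blast+

lemma p1_tuple [simp]: "Ar f \<Longrightarrow> Ar g \<Longrightarrow> dm f = dm g \<Longrightarrow> cd f = X \<Longrightarrow> cd g = Y \<Longrightarrow> p1 X Y \<cdot> tup f g = f"
  and p2_tuple [simp]: "Ar f \<Longrightarrow> Ar g \<Longrightarrow> dm f = dm g \<Longrightarrow> cd f = X \<Longrightarrow> cd g = Y \<Longrightarrow> p2 X Y \<cdot> tup f g = g"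
  using tuple_prop by blast+

lemma tuple_unique:
  assumes "Ar f" "Ar g" "dm f = dm g" "Ar h" "dm h = dm f" "cd h = P (cd f) (cd g)"
    "p1 (cd f) (cd g) \<cdot> h = f" "p2 (cd f) (cd g) \<cdot> h = g"
  shows "h = tup f g"
  using tuple_ex1[OF assms(1-3)] tuple_prop[OF assms(1-3)] assms(4-) by (auto simp: hom_iff)

lemma tuple_comp [simp]:
  assumes "Ar f" "Ar g" "dm f = dm g" "Ar x" "cd x = dm f"
  shows "tup f g \<cdot> x = tup (f \<cdot> x) (g \<cdot> x)"
proof (rule tuple_unique)
  show "p1 (cd (f \<cdot> x)) (cd (g \<cdot> x)) \<cdot> tup f g \<cdot> x = f \<cdot> x"
    using assms comp_assoc[of x "tup f g" "p1 (cd f) (cd g)"] by simp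
  show "p2 (cd (f \<cdot> x)) (cd (g \<cdot> x)) \<cdot> tup f g \<cdot> x = g \<cdot> x"
    using assms comp_assoc[of x "tup f g" "p2 (cd f) (cd g)"] by simp
qed (use assms in auto)

lemma tuple_eq_iff:
  assumes "Ar f" "Ar g" "dm f = dm g" "Ar f'" "Ar g'" "dm f' = dm g'" "cd f = cd f'" "cd g = cd g'"
  shows "tup f g = tup f' g' \<longleftrightarrow> f = f' \<and> g = g'"
  by (metis assms p1_tuple p2_tuple)

lemma prod_arr_tuple [simp]:
  "Ar u \<Longrightarrow> Ar v \<Longrightarrow> Ar f \<Longrightarrow> Ar g \<Longrightarrow> dm f = dm g \<Longrightarrow> cd f = dm u \<Longrightarrow> cd g = dm v \<Longrightarrow>
    prod_arr Ac P p1 p2 u v \<cdot> tup f g = tup (u \<cdot> f) (v \<cdot> g)"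
  unfolding prod_arr_def by simp

end

locale binary_coproducts = category +
  fixes S and i1 i2
  assumes has_binary_coproducts: "has_binary_coproducts Ac S i1 i2"
begin

abbreviation "cotup \<equiv> cotuple Ac S i1 i2"

lemma coproduct_cocone:
  assumes "Ob X" "Ob Y"
  shows "Ob (S X Y)" "i1 X Y \<in> hom Ac X (S X Y)" "i2 X Y \<in> hom Ac Y (S X Y)"
  using has_binary_coproducts assms by (simp_all add: has_binary_coproducts_def)

lemma S_obj [simp]: "Ob X \<Longrightarrow> Ob Y \<Longrightarrow> Ob (S X Y)"
  and i1_arr [simp]: "Ob X \<Longrightarrow> Ob Y \<Longrightarrow> Ar (i1 X Y)"
  and i1_dom [simp]: "Ob X \<Longrightarrow> Ob Y \<Longrightarrow> dm (i1 X Y) = X"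
  and i1_cod [simp]: "Ob X \<Longrightarrow> Ob Y \<Longrightarrow> cd (i1 X Y) = S X Y"
  and i2_arr [simp]: "Ob X \<Longrightarrow> Ob Y \<Longrightarrow> Ar (i2 X Y)"
  and i2_dom [simp]: "Ob X \<Longrightarrow> Ob Y \<Longrightarrow> dm (i2 X Y) = Y"
  and i2_cod [simp]: "Ob X \<Longrightarrow> Ob Y \<Longrightarrow> cd (i2 X Y) = S X Y"
  using coproduct_cocone hom_iff by blast+

lemma cotuple_ex1:
  assumes "Ar f" "Ar g" "cd f = cd g"
  shows "\<exists>!h. h \<in> hom Ac (S (dm f) (dm g)) (cd f) \<and> h \<cdot> i1 (dm f) (dm g) = f \<and> h \<cdot> i2 (dm f) (dm g) = g"
proof -
  have "f \<in> hom Ac (dm f) (cd f)" "g \<in> hom Ac (dm g) (cd f)"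
    using assms by (auto simp: hom_iff)
  then show ?thesis
    using has_binary_coproducts assms unfolding has_binary_coproducts_def by simp
qed

lemma cotuple_prop:
  assumes "Ar f" "Ar g" "cd f = cd g"
  shows "cotup f g \<in> hom Ac (S (dm f) (dm g)) (cd f) \<and> cotup f g \<cdot> i1 (dm f) (dm g) = f \<and> cotup f g \<cdot> i2 (dm f) (dm g) = g"
  unfolding cotuple_def by (rule theI'[OF cotuple_ex1[OF assms]])

lemma cotuple_arr [simp]: "Ar f \<Longrightarrow> Ar g \<Longrightarrow> cd f = cd g \<Longrightarrow> Ar (cotup f g)"
  and cotuple_dom [simp]: "Ar f \<Longrightarrow> Ar g \<Longrightarrow> cd f = cd g \<Longrightarrow> dm (cotup f g) = S (dm f) (dm g)"
  and cotuple_cod [simp]: "Ar f \<Longrightarrow> Ar g \<Longrightarrow> cd f = cd g \<Longrightarrow> cd (cotup f g) = cd f"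
  using cotuple_prop hom_iff by blast+

lemma cotuple_i1 [simp]: "Ar f \<Longrightarrow> Ar g \<Longrightarrow> cd f = cd g \<Longrightarrow> dm f = X \<Longrightarrow> dm g = Y \<Longrightarrow> cotup f g \<cdot> i1 X Y = f"
  and cotuple_i2 [simp]: "Ar f \<Longrightarrow> Ar g \<Longrightarrow> cd f = cd g \<Longrightarrow> dm f = X \<Longrightarrow> dm g = Y \<Longrightarrow> cotup f g \<cdot> i2 X Y = g"
  using cotuple_prop by blast+

lemma cotuple_i1_reassoc [simp]:
  "Ar f \<Longrightarrow> Ar g \<Longrightarrow> cd f = cd g \<Longrightarrow> dm f = X \<Longrightarrow> dm g = Y \<Longrightarrow> Ar x \<Longrightarrow> cd x = X \<Longrightarrow>
    cotup f g \<cdot> i1 X Y \<cdot> x = f \<cdot> x"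
  by (rule comp_reassoc) auto

lemma cotuple_unique:
  assumes "Ar f" "Ar g" "cd f = cd g" "Ar h" "cd h = cd f" "dm h = S (dm f) (dm g)"
    "h \<cdot> i1 (dm f) (dm g) = f" "h \<cdot> i2 (dm f) (dm g) = g"
  shows "h = cotup f g"
  using cotuple_ex1[OF assms(1-3)] cotuple_prop[OF assms(1-3)] assms(4-) by (auto simp: hom_iff)

lemma comp_cotuple [simp]:
  assumes "Ar f" "Ar g" "cd f = cd g" "Ar x" "dm x = cd f"
  shows "x \<cdot> cotup f g = cotup (x \<cdot> f) (x \<cdot> g)"
proof (rule cotuple_unique)
  show "(x \<cdot> cotup f g) \<cdot> i1 (dm (x \<cdot> f)) (dm (x \<cdot> g)) = x \<cdot> f"
    using assms comp_assoc[of "i1 (dm f) (dm g)" "cotup f g" x] by simp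
  show "(x \<cdot> cotup f g) \<cdot> i2 (dm (x \<cdot> f)) (dm (x \<cdot> g)) = x \<cdot> g"
    using assms comp_assoc[of "i2 (dm f) (dm g)" "cotup f g" x] by simp
qed (use assms in auto)

lemma comp_cotuple_reassoc [simp]:
  assumes "Ar f" "Ar g" "cd f = cd g" "Ar x" "dm x = cd f" "Ar y" "cd y = S (dm f) (dm g)"
  shows "x \<cdot> cotup f g \<cdot> y = cotup (x \<cdot> f) (x \<cdot> g) \<cdot> y"
  using assms comp_assoc[of y "cotup f g" x] by simp

lemma cotuple_ext:
  assumes "Ar h" "Ar k" "cd h = cd k" "dm h = S X Y" "dm k = S X Y" "Ob X" "Ob Y"
    "h \<cdot> i1 X Y = k \<cdot> i1 X Y" "h \<cdot> i2 X Y = k \<cdot> i2 X Y"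
  shows "h = k"
proof -
  have "h = cotup (h \<cdot> i1 X Y) (h \<cdot> i2 X Y)" by (rule cotuple_unique) (use assms in auto)
  moreover have "k = cotup (k \<cdot> i1 X Y) (k \<cdot> i2 X Y)" by (rule cotuple_unique) (use assms in auto)
  ultimately show ?thesis using assms by simp
qed

end

locale free_algebras = category Ac + K: endofunctor Ac K for Ac K +
  fixes M and phi eta
  assumes has_free_algebras: "has_free_algebras Ac K M phi eta"
begin

abbreviation "KA \<equiv> FArr K"
abbreviation "KO \<equiv> FObj K"
abbreviation "Mf \<equiv> free_arr Ac K M phi eta"
abbreviation "sh \<equiv> sharp Ac K M phi eta"
abbreviation "mu X \<equiv> sh (phi X)"

lemma free_algebra:
  assumes "Ob X"
  shows "Ob (M X)" "phi X \<in> hom Ac (KO (M X)) (M X)" "eta X \<in> hom Ac X (M X)"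
  using has_free_algebras assms by (simp_all add: has_free_algebras_def)

lemma M_obj [simp]: "Ob X \<Longrightarrow> Ob (M X)"
  and phi_arr [simp]: "Ob X \<Longrightarrow> Ar (phi X)"
  and phi_dom [simp]: "Ob X \<Longrightarrow> dm (phi X) = KO (M X)"
  and phi_cod [simp]: "Ob X \<Longrightarrow> cd (phi X) = M X"
  and eta_arr [simp]: "Ob X \<Longrightarrow> Ar (eta X)"
  and eta_dom [simp]: "Ob X \<Longrightarrow> dm (eta X) = X"
  and eta_cod [simp]: "Ob X \<Longrightarrow> cd (eta X) = M X"
  using free_algebra hom_iff by blast+

lemma free_extension_ex1:
  assumes "Ob X" "Ar a" "dm a = KO B" "cd a = B" "Ar f" "dm f = X" "cd f = B"
  shows "\<exists>!h. h \<in> hom Ac (M X) B \<and> h \<cdot> phi X = a \<cdot> KA h \<and> h \<cdot> eta X = f"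
proof -
  have "a \<in> hom Ac (KO B) B" "f \<in> hom Ac X B" "Ob B"
    using assms by (auto simp: hom_iff)
  moreover have "\<forall>B\<in>Obj Ac. \<forall>a\<in>hom Ac (KO B) B. \<forall>f\<in>hom Ac X B.
      \<exists>!h. h \<in> hom Ac (M X) B \<and> h \<cdot> phi X = a \<cdot> KA h \<and> h \<cdot> eta X = f"
    using has_free_algebras assms(1) unfolding has_free_algebras_def by simp
  ultimately show ?thesis by simp
qed

lemma free_extension_unique:
  assumes "Ob X" "Ar a" "dm a = KO B" "cd a = B"
    "Ar h1" "dm h1 = M X" "cd h1 = B" "Ar h2" "dm h2 = M X" "cd h2 = B"
    "h1 \<cdot> phi X = a \<cdot> KA h1" "h2 \<cdot> phi X = a \<cdot> KA h2" "h1 \<cdot> eta X = h2 \<cdot> eta X"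
  shows "h1 = h2"
proof -
  have "Ar (h2 \<cdot> eta X)" "dm (h2 \<cdot> eta X) = X" "cd (h2 \<cdot> eta X) = B" using assms by auto
  from free_extension_ex1[OF assms(1-4) this] show ?thesis using assms by (simp add: hom_iff) blast
qed

lemma free_arr_prop:
  assumes "Ar f"
  shows "Mf f \<in> hom Ac (M (dm f)) (M (cd f)) \<and>
    Mf f \<cdot> phi (dm f) = phi (cd f) \<cdot> KA (Mf f) \<and> Mf f \<cdot> eta (dm f) = eta (cd f) \<cdot> f"
  unfolding free_arr_def by (rule theI'[OF free_extension_ex1]) (use assms in auto)

lemma free_arr_arr [simp]: "Ar f \<Longrightarrow> Ar (Mf f)"
  and free_arr_dom [simp]: "Ar f \<Longrightarrow> dm (Mf f) = M (dm f)"
  and free_arr_cod [simp]: "Ar f \<Longrightarrow> cd (Mf f) = M (cd f)"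
  using free_arr_prop hom_iff by blast+

lemma free_arr_eta [simp]: "Ar f \<Longrightarrow> dm f = X \<Longrightarrow> Mf f \<cdot> eta X = eta (cd f) \<cdot> f"
  and free_arr_phi [simp]: "Ar f \<Longrightarrow> dm f = X \<Longrightarrow> Mf f \<cdot> phi X = phi (cd f) \<cdot> KA (Mf f)"
  using free_arr_prop by blast+

lemma free_arr_eta_reassoc [simp]:
  "Ar f \<Longrightarrow> dm f = X \<Longrightarrow> Ar x \<Longrightarrow> cd x = X \<Longrightarrow> Mf f \<cdot> eta X \<cdot> x = eta (cd f) \<cdot> f \<cdot> x"
  using comp_reassoc[of "Mf f" "eta X" "eta (cd f) \<cdot> f" x] by auto

lemma free_arr_phi_reassoc [simp]:
  "Ar f \<Longrightarrow> dm f = X \<Longrightarrow> Ar x \<Longrightarrow> cd x = KO (M X) \<Longrightarrow> Mf f \<cdot> phi X \<cdot> x = phi (cd f) \<cdot> KA (Mf f) \<cdot> x"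
  using comp_reassoc[of "Mf f" "phi X" "phi (cd f) \<cdot> KA (Mf f)" x] by auto

lemma sharp_prop:
  assumes "Ar a" "dm a = KO (cd a)"
  shows "sh a \<in> hom Ac (M (cd a)) (cd a) \<and> sh a \<cdot> phi (cd a) = a \<cdot> KA (sh a) \<and> sh a \<cdot> eta (cd a) = ide (cd a)"
  unfolding sharp_def by (rule theI'[OF free_extension_ex1]) (use assms in auto)

lemma sharp_arr [simp]: "Ar a \<Longrightarrow> dm a = KO (cd a) \<Longrightarrow> Ar (sh a)"
  and sharp_dom [simp]: "Ar a \<Longrightarrow> dm a = KO (cd a) \<Longrightarrow> dm (sh a) = M (cd a)"
  and sharp_cod [simp]: "Ar a \<Longrightarrow> dm a = KO (cd a) \<Longrightarrow> cd (sh a) = cd a"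
  using sharp_prop hom_iff by blast+

lemma sharp_eta [simp]: "Ar a \<Longrightarrow> dm a = KO (cd a) \<Longrightarrow> cd a = B \<Longrightarrow> sh a \<cdot> eta B = ide B"
  and sharp_phi [simp]: "Ar a \<Longrightarrow> dm a = KO (cd a) \<Longrightarrow> cd a = B \<Longrightarrow> sh a \<cdot> phi B = a \<cdot> KA (sh a)"
  using sharp_prop by blast+

lemma sharp_eta_reassoc [simp]:
  "Ar a \<Longrightarrow> dm a = KO (cd a) \<Longrightarrow> cd a = B \<Longrightarrow> Ar x \<Longrightarrow> cd x = B \<Longrightarrow> sh a \<cdot> eta B \<cdot> x = x"
  using comp_reassoc[of "sh a" "eta B" "ide B" x] by auto

lemma sharp_phi_reassoc [simp]:
  "Ar a \<Longrightarrow> dm a = KO (cd a) \<Longrightarrow> cd a = B \<Longrightarrow> Ar x \<Longrightarrow> cd x = KO (M B) \<Longrightarrow> sh a \<cdot> phi B \<cdot> x = a \<cdot> KA (sh a) \<cdot> x"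
  using comp_reassoc[of "sh a" "phi B" "a \<cdot> KA (sh a)" x] by auto

lemma sharp_free_arr_unique:
  assumes "Ar a" "dm a = KO B" "cd a = B" "Ar f" "cd f = B" "dm f = Z"
    "Ar g" "dm g = M Z" "cd g = B" "g \<cdot> phi Z = a \<cdot> KA g" "g \<cdot> eta Z = f"
  shows "g = sh a \<cdot> Mf f"
proof -
  have "Ob Z" using assms by (metis dom_obj)
  then show ?thesis by (rule free_extension_unique[of Z a B]) (use assms \<open>Ob Z\<close> in simp_all)
qed

lemma free_arr_comp [simp]:
  assumes "Ar f" "Ar g" "cd f = dm g"
  shows "Mf (g \<cdot> f) = Mf g \<cdot> Mf f"
  by (rule free_extension_unique[of "dm f" "phi (cd g)" "M (cd g)"]) (use assms in simp_all)

lemma mu_free_arr_eta: "Ob X \<Longrightarrow> mu X \<cdot> Mf (eta X) = ide (M X)"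
  by (rule sharp_free_arr_unique[of "phi X" "M X" "eta X" X, symmetric]) simp_all

lemma mu_assoc: "Ob X \<Longrightarrow> mu X \<cdot> Mf (mu X) = mu X \<cdot> mu (M X)"
  by (rule sharp_free_arr_unique[of "phi X" "M X" "mu X" "M (M X)", symmetric]) simp_all

lemma sharp_free_arr_mu:
  assumes "Ar a" "dm a = KO B" "cd a = B" "Ar f" "cd f = B" "dm f = Z"
  shows "sh a \<cdot> Mf (sh a) \<cdot> Mf (Mf f) = sh a \<cdot> Mf f \<cdot> mu Z"
proof -
  have Z: "Ob Z" using assms by (metis dom_obj)
  have "sh a \<cdot> Mf (sh a \<cdot> Mf f) = (sh a \<cdot> Mf f) \<cdot> mu Z"
    by (rule sharp_free_arr_unique[of a B "sh a \<cdot> Mf f" "M Z", symmetric]) (use assms Z in simp_all)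
  then show ?thesis using assms Z by simp
qed

end

locale terminal_coalgebra = category Ac + H: endofunctor Ac H for Ac H +
  fixes C and c
  assumes is_terminal_coalgebra: "is_terminal_coalgebra Ac H C c"
begin

lemma C_obj [simp]: "Ob C"
  and c_arr [simp]: "Ar c"
  and c_dom [simp]: "dm c = C"
  and c_cod [simp]: "cd c = FObj H C"
  using is_terminal_coalgebra by (simp_all add: is_terminal_coalgebra_def hom_iff)

lemma coalgebra_hom_ex1:
  assumes "Ar d" "dm d = X" "cd d = FObj H X"
  shows "\<exists>!h. h \<in> hom Ac X C \<and> c \<cdot> h = FArr H h \<cdot> d"
proof -
  have "Ob X" "d \<in> hom Ac X (FObj H X)" using assms by (auto simp: hom_iff)
  moreover have "\<forall>X\<in>Obj Ac. \<forall>e\<in>hom Ac X (FObj H X). \<exists>!h. h \<in> hom Ac X C \<and> c \<cdot> h = FArr H h \<cdot> e"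
    using is_terminal_coalgebra unfolding is_terminal_coalgebra_def by simp
  ultimately show ?thesis by simp
qed

lemma coalgebra_hom_exists:
  assumes "Ar d" "dm d = X" "cd d = FObj H X"
  obtains h where "Ar h" "dm h = X" "cd h = C" "c \<cdot> h = FArr H h \<cdot> d"
  using ex1_implies_ex[OF coalgebra_hom_ex1[OF assms]] by (auto simp: hom_iff)

lemma coalgebra_hom_unique:
  assumes "Ar d" "dm d = X" "cd d = FObj H X"
    "Ar f" "dm f = X" "cd f = C" "Ar g" "dm g = X" "cd g = C"
    "c \<cdot> f = FArr H f \<cdot> d" "c \<cdot> g = FArr H g \<cdot> d"
  shows "f = g"
  using coalgebra_hom_ex1[OF assms(1-3)] assms by (simp add: hom_iff) blast

lemma lambek:
  obtains g where "Ar g" "dm g = FObj H C" "cd g = C" "g \<cdot> c = ide C" "c \<cdot> g = ide (FObj H C)"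
proof -
  obtain g where g: "Ar g" "dm g = FObj H C" "cd g = C" "c \<cdot> g = FArr H g \<cdot> FArr H c"
    using coalgebra_hom_exists[of "FArr H c" "FObj H C"] by auto
  have "c \<cdot> g \<cdot> c = FArr H g \<cdot> FArr H c \<cdot> c"
    using comp_reassoc[OF g(4)] g by simp
  then have gc: "c \<cdot> (g \<cdot> c) = FArr H (g \<cdot> c) \<cdot> c"
    using g by simp
  have "g \<cdot> c = ide C"
    by (rule coalgebra_hom_unique[OF _ _ _ _ _ _ _ _ _ gc]) (use g in simp_all)
  moreover have "c \<cdot> g = FArr H (g \<cdot> c)" using g by simp
  ultimately show ?thesis using that g by simp
qed

definition "cinv = inverse_arr Ac c"

lemma cinv_prop: "Ar cinv \<and> dm cinv = FObj H C \<and> cd cinv = C \<and> cinv \<cdot> c = ide C \<and> c \<cdot> cinv = ide (FObj H C)"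
proof -
  obtain g where g: "Ar g" "dm g = FObj H C" "cd g = C" "g \<cdot> c = ide C" "c \<cdot> g = ide (FObj H C)"
    using lambek by blast
  have "inverse_arr Ac c = g" unfolding inverse_arr_def
  proof (rule the_equality)
    show "g \<in> hom Ac (cd c) (dm c) \<and> g \<cdot> c = ide (dm c) \<and> c \<cdot> g = ide (cd c)"
      using g by (simp add: hom_iff)
  next
    fix g' assume g': "g' \<in> hom Ac (cd c) (dm c) \<and> g' \<cdot> c = ide (dm c) \<and> c \<cdot> g' = ide (cd c)"
    then have "g' = g' \<cdot> c \<cdot> g" using g by (simp add: hom_iff)
    also have "\<dots> = g" using g' g comp_assoc[of g c g'] by (simp add: hom_iff)
    finally show "g' = g" .
  qed
  then show ?thesis using g by (simp add: cinv_def)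
qed

lemma cinv_arr [simp]: "Ar cinv"
  and cinv_dom [simp]: "dm cinv = FObj H C"
  and cinv_cod [simp]: "cd cinv = C"
  and cinv_c [simp]: "cinv \<cdot> c = ide C"
  and c_cinv [simp]: "c \<cdot> cinv = ide (FObj H C)"
  using cinv_prop by blast+

lemma c_cinv_reassoc [simp]: "Ar x \<Longrightarrow> cd x = FObj H C \<Longrightarrow> c \<cdot> cinv \<cdot> x = x"
  using comp_reassoc[of c cinv "ide (FObj H C)" x] by simp

lemma cinv_c_reassoc [simp]: "Ar x \<Longrightarrow> cd x = C \<Longrightarrow> cinv \<cdot> c \<cdot> x = x"
  using comp_reassoc[of cinv c "ide C" x] by simp

end

locale gsos_rule =
  binary_products Ac P p1 p2 + free_algebras Ac K M phi eta + H: endofunctor Ac H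
  for Ac P p1 p2 K M phi eta H +
  fixes l
  assumes is_GSOS_rule: "is_GSOS_rule Ac P p1 p2 H K M phi eta l"
begin

abbreviation "HA \<equiv> FArr H"
abbreviation "HO \<equiv> FObj H"

lemma l_hom: "Ob X \<Longrightarrow> l X \<in> hom Ac (KO (P (HO X) X)) (HO (M X))"
  using is_GSOS_rule by (simp add: is_GSOS_rule_def)

lemma l_arr [simp]: "Ob X \<Longrightarrow> Ar (l X)"
  and l_dom [simp]: "Ob X \<Longrightarrow> dm (l X) = KO (P (HO X) X)"
  and l_cod [simp]: "Ob X \<Longrightarrow> cd (l X) = HO (M X)"
  using l_hom hom_iff by blast+

lemma l_natural:
  assumes "Ar f"
  shows "HA (Mf f) \<cdot> l (dm f) = l (cd f) \<cdot> KA (prod_arr Ac P p1 p2 (HA f) f)"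
proof -
  have "f \<in> hom Ac (dm f) (cd f)" using assms by (simp add: hom_iff)
  then show ?thesis
    using is_GSOS_rule assms unfolding is_GSOS_rule_def by simp
qed

lemma K_tuple_comp [simp]:
  assumes "Ar u" "Ar v" "dm u = dm v" "Ar x" "cd x = dm u"
  shows "KA (tup u v) \<cdot> KA x = KA (tup (u \<cdot> x) (v \<cdot> x))"
  using assms K.map_comp[of x "tup u v"] by simp

lemma K_tuple_comp_reassoc [simp]:
  assumes "Ar u" "Ar v" "dm u = dm v" "Ar x" "cd x = dm u" "Ar y" "cd y = KO (dm x)"
  shows "KA (tup u v) \<cdot> KA x \<cdot> y = KA (tup (u \<cdot> x) (v \<cdot> x)) \<cdot> y"
  using assms comp_assoc[of y "KA x" "KA (tup u v)"] by simp

lemma K_p2_tuple [simp]: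
  assumes "Ar u" "Ar v" "dm u = dm v" "cd u = X" "cd v = Y"
  shows "KA (p2 X Y) \<cdot> KA (tup u v) = KA v"
  using assms K.map_comp[of "tup u v" "p2 X Y"] by (metis p2_tuple tuple_arr tuple_cod p2_arr p2_dom cod_obj)

lemma l_natural_tuple:
  assumes "Ar f" "dm f = X" "cd f = Y" "Ar u" "Ar v" "dm u = dm v" "cd u = HO X" "cd v = X"
  shows "l Y \<cdot> KA (tup (HA f \<cdot> u) (f \<cdot> v)) = HA (Mf f) \<cdot> l X \<cdot> KA (tup u v)"
proof -
  have XY: "Ob X" "Ob Y" using assms by (metis dom_obj, metis cod_obj)
  let ?pa = "prod_arr Ac P p1 p2 (HA f) f"
  have pa: "?pa = tup (HA f \<cdot> p1 (HO X) X) (f \<cdot> p2 (HO X) X)"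
    using assms by (simp add: prod_arr_def)
  have pa_arr: "Ar ?pa" "dm ?pa = P (HO X) X" "cd ?pa = P (HO Y) Y"
    unfolding pa using assms XY by auto
  have "tup (HA f \<cdot> u) (f \<cdot> v) = ?pa \<cdot> tup u v" using assms XY by simp
  then have "KA (tup (HA f \<cdot> u) (f \<cdot> v)) = KA ?pa \<cdot> KA (tup u v)"
    using K.map_comp[of "tup u v" ?pa] assms pa_arr by simp
  then have "l Y \<cdot> KA (tup (HA f \<cdot> u) (f \<cdot> v)) = l Y \<cdot> KA ?pa \<cdot> KA (tup u v)"
    by simp
  also have "\<dots> = HA (Mf f) \<cdot> l X \<cdot> KA (tup u v)"
    using comp_reassoc[OF l_natural[OF assms(1), symmetric], of "KA (tup u v)"] assms XY pa_arr by simp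
  finally show ?thesis .
qed

lemma H_mu_eta_reassoc:
  assumes "Ob Z" "Ar x" "cd x = HO (M Z)"
  shows "HA (mu Z) \<cdot> HA (eta (M Z)) \<cdot> x = x"
  using H.map_comp_reassoc[of "mu Z" "eta (M Z)" "ide (M Z)" x] assms by simp

lemma H_free_arr_eta_reassoc:
  assumes "Ar f" "dm f = Z" "Ar x" "cd x = HO Z"
  shows "HA (Mf f) \<cdot> HA (eta Z) \<cdot> x = HA (eta (cd f)) \<cdot> HA f \<cdot> x"
proof -
  have Z: "Ob Z" using assms by (metis dom_obj)
  have "HA (Mf f) \<cdot> HA (eta Z) \<cdot> x = HA (eta (cd f) \<cdot> f) \<cdot> x"
    by (rule H.map_comp_reassoc) (use assms Z in simp_all)
  then show ?thesis using assms Z by simp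
qed

text \<open>The last clause says that \<open>\<langle>D, id\<rangle>\<close> is a \<open>K\<close>-algebra homomorphism from \<open>\<phi>\<close> to
  \<open>\<langle>H\<mu> \<cdot> l, \<phi> \<cdot> K\<pi>\<^sub>2\<rangle>\<close>; this is how \<open>D\<close> is obtained, by freeness.\<close>
definition is_gsos_extension where
  "is_gsos_extension Z d D \<longleftrightarrow>
     Ar D \<and> dm D = M Z \<and> cd D = HO (M Z) \<and> D \<cdot> eta Z = d \<and>
     D \<cdot> phi Z = HA (mu Z) \<cdot> l (M Z) \<cdot> KA (tup D (ide (M Z)))"

lemma gsos_extensionD:
  assumes "is_gsos_extension Z d D"
  shows "Ar D" "dm D = M Z" "cd D = HO (M Z)" "D \<cdot> eta Z = d"
    "D \<cdot> phi Z = HA (mu Z) \<cdot> l (M Z) \<cdot> KA (tup D (ide (M Z)))"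
  using assms by (simp_all add: is_gsos_extension_def)

lemma gsos_extension_exists:
  assumes Z: "Ob Z" and d: "Ar d" "dm d = Z" "cd d = HO (M Z)"
  obtains D where "is_gsos_extension Z d D"
proof -
  let ?Q = "P (HO (M Z)) (M Z)"
  let ?p1 = "p1 (HO (M Z)) (M Z)" and ?p2 = "p2 (HO (M Z)) (M Z)"
  let ?alg = "tup (HA (mu Z) \<cdot> l (M Z)) (phi Z \<cdot> KA ?p2)"
  have alg: "Ar ?alg" "dm ?alg = KO ?Q" "cd ?alg = ?Q" using Z by auto
  have td: "Ar (tup d (eta Z))" "dm (tup d (eta Z)) = Z" "cd (tup d (eta Z)) = ?Q" using Z d by auto
  obtain E where E: "E \<in> hom Ac (M Z) ?Q" "E \<cdot> phi Z = ?alg \<cdot> KA E" "E \<cdot> eta Z = tup d (eta Z)"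
    using ex1_implies_ex[OF free_extension_ex1[OF Z alg td]] by blast
  have Ea: "Ar E" "dm E = M Z" "cd E = ?Q" using E(1) by (auto simp: hom_iff)
  have "?p2 \<cdot> E = ide (M Z)"
  proof (rule free_extension_unique[of Z "phi Z" "M Z"])
    have "?p2 \<cdot> E \<cdot> phi Z = ?p2 \<cdot> ?alg \<cdot> KA E" using E(2) by simp
    also have "\<dots> = phi Z \<cdot> KA (?p2 \<cdot> E)" using Z Ea by simp
    finally show "(?p2 \<cdot> E) \<cdot> phi Z = phi Z \<cdot> KA (?p2 \<cdot> E)" using Z Ea by simp
    have "?p2 \<cdot> E \<cdot> eta Z = ?p2 \<cdot> tup d (eta Z)" using E(3) by simp
    then show "(?p2 \<cdot> E) \<cdot> eta Z = ide (M Z) \<cdot> eta Z" using Z Ea d by simp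
  qed (use Z Ea in simp_all)
  then have Et: "E = tup (?p1 \<cdot> E) (ide (M Z))"
    using tuple_unique[of "?p1 \<cdot> E" "ide (M Z)" E] Z Ea by simp
  show ?thesis
  proof (rule that, unfold is_gsos_extension_def, intro conjI)
    show "Ar (?p1 \<cdot> E)" "dm (?p1 \<cdot> E) = M Z" "cd (?p1 \<cdot> E) = HO (M Z)" using Z Ea by auto
    have "?p1 \<cdot> E \<cdot> eta Z = ?p1 \<cdot> tup d (eta Z)" using E(3) by simp
    then show "(?p1 \<cdot> E) \<cdot> eta Z = d" using Z Ea d by simp
    have "?p1 \<cdot> E \<cdot> phi Z = ?p1 \<cdot> ?alg \<cdot> KA E" using E(2) by simp
    also have "\<dots> = HA (mu Z) \<cdot> l (M Z) \<cdot> KA E" using Z Ea by simp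
    also have "\<dots> = HA (mu Z) \<cdot> l (M Z) \<cdot> KA (tup (?p1 \<cdot> E) (ide (M Z)))" using Et by metis
    finally show "(?p1 \<cdot> E) \<cdot> phi Z = HA (mu Z) \<cdot> l (M Z) \<cdot> KA (tup (?p1 \<cdot> E) (ide (M Z)))"
      using Z Ea by simp
  qed
qed

lemma gsos_extension_mu:
  assumes Y: "Ob Y" and "is_gsos_extension Y w0 w"
    and "is_gsos_extension (M Y) (HA (eta (M Y)) \<cdot> w) D2"
  shows "w \<cdot> mu Y = HA (mu Y) \<cdot> D2"
proof -
  note w = gsos_extensionD[OF assms(2)] and D2 = gsos_extensionD[OF assms(3)]
  let ?Q = "P (HO (M Y)) (M Y)"
  let ?alg = "tup (HA (mu Y) \<cdot> l (M Y)) (phi Y \<cdot> KA (p2 (HO (M Y)) (M Y)))"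
  have alg: "Ar ?alg" "dm ?alg = KO ?Q" "cd ?alg = ?Q" using Y by auto
  have w_phi: "w \<cdot> phi Y \<cdot> x = HA (mu Y) \<cdot> l (M Y) \<cdot> KA (tup w (ide (M Y))) \<cdot> x"
    if "Ar x" "cd x = KO (M Y)" for x
    using comp_reassoc[OF w(5)] that w Y by simp
  have D2_phi: "D2 \<cdot> phi (M Y) \<cdot> x = HA (mu (M Y)) \<cdot> l (M (M Y)) \<cdot> KA (tup D2 (ide (M (M Y)))) \<cdot> x"
    if "Ar x" "cd x = KO (M (M Y))" for x
    using comp_reassoc[OF D2(5)] that D2 Y by simp
  have D2_eta: "D2 \<cdot> eta (M Y) \<cdot> x = HA (eta (M Y)) \<cdot> w \<cdot> x" if "Ar x" "cd x = M Y" for x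
    using comp_reassoc[OF D2(4)] that D2 Y w by simp
  have nat: "l (M Y) \<cdot> KA (tup (HA (mu Y) \<cdot> D2) (mu Y \<cdot> ide (M (M Y)))) =
      HA (Mf (mu Y)) \<cdot> l (M (M Y)) \<cdot> KA (tup D2 (ide (M (M Y))))"
    by (rule l_natural_tuple) (use Y D2 in auto)
  have H_mu_assoc: "HA (mu Y) \<cdot> HA (Mf (mu Y)) \<cdot> x = HA (mu Y) \<cdot> HA (mu (M Y)) \<cdot> x"
    if "Ar x" "cd x = HO (M (M (M Y)))" for x
  proof -
    have "HA (mu Y) \<cdot> HA (Mf (mu Y)) \<cdot> x = HA (mu Y \<cdot> Mf (mu Y)) \<cdot> x"
      by (rule H.map_comp_reassoc) (use that Y in simp_all)
    also have "\<dots> = HA (mu Y \<cdot> mu (M Y)) \<cdot> x" using mu_assoc[OF Y] by simp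
    finally show ?thesis using that Y by simp
  qed
  have "tup (w \<cdot> mu Y) (mu Y) = tup (HA (mu Y) \<cdot> D2) (mu Y)"
  proof (rule free_extension_unique[of "M Y" ?alg ?Q])
    show "tup (w \<cdot> mu Y) (mu Y) \<cdot> phi (M Y) = ?alg \<cdot> KA (tup (w \<cdot> mu Y) (mu Y))"
      using Y w by (simp add: w_phi)
    have "tup (HA (mu Y) \<cdot> D2) (mu Y) \<cdot> phi (M Y) =
       tup (HA (mu Y) \<cdot> HA (mu (M Y)) \<cdot> l (M (M Y)) \<cdot> KA (tup D2 (ide (M (M Y))))) (phi Y \<cdot> KA (mu Y))"
      using Y D2 by (simp add: D2_phi)
    also have "\<dots> = ?alg \<cdot> KA (tup (HA (mu Y) \<cdot> D2) (mu Y))"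
    proof -
      have "HA (mu Y) \<cdot> l (M Y) \<cdot> KA (tup (HA (mu Y) \<cdot> D2) (mu Y \<cdot> ide (M (M Y)))) =
          HA (mu Y) \<cdot> HA (Mf (mu Y)) \<cdot> l (M (M Y)) \<cdot> KA (tup D2 (ide (M (M Y))))"
        using nat by simp
      also have "\<dots> = HA (mu Y) \<cdot> HA (mu (M Y)) \<cdot> l (M (M Y)) \<cdot> KA (tup D2 (ide (M (M Y))))"
        using Y D2 by (simp add: H_mu_assoc)
      finally show ?thesis using Y D2 by simp
    qed
    finally show "tup (HA (mu Y) \<cdot> D2) (mu Y) \<cdot> phi (M Y) = ?alg \<cdot> KA (tup (HA (mu Y) \<cdot> D2) (mu Y))" .
    show "tup (w \<cdot> mu Y) (mu Y) \<cdot> eta (M Y) = tup (HA (mu Y) \<cdot> D2) (mu Y) \<cdot> eta (M Y)"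
      using Y w D2 by (simp add: D2_eta H_mu_eta_reassoc)
  qed (use Y w D2 in simp_all)
  then show ?thesis
    using tuple_eq_iff[of "w \<cdot> mu Y" "mu Y" "HA (mu Y) \<cdot> D2" "mu Y"] Y w D2 by simp
qed

end

locale gsos_interpretation = gsos_rule Ac P p1 p2 K M phi eta H l + terminal_coalgebra Ac H C c
  for Ac P p1 p2 K M phi eta H l C c +
  fixes b
  assumes is_l_interpretation: "is_l_interpretation Ac P p1 p2 H K M phi eta l C c b"
begin

abbreviation "beta \<equiv> sh b"

lemma b_hom: "b \<in> hom Ac (KO C) C"
  and c_b: "c \<cdot> b = HA beta \<cdot> l C \<cdot> KA (tup c (ide C))"
proof -
  show b: "b \<in> hom Ac (KO C) C"
    using is_l_interpretation unfolding is_l_interpretation_def by (rule conjunct1)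
  have "\<forall>b' \<in> hom Ac (KO C) C. c \<cdot> b' = HA (sh b') \<cdot> (l C \<cdot> KA (tup c (ide C))) \<longleftrightarrow> b' = b"
    using is_l_interpretation unfolding is_l_interpretation_def by (rule conjunct2)
  with b show "c \<cdot> b = HA beta \<cdot> l C \<cdot> KA (tup c (ide C))" by blast
qed

lemma b_arr [simp]: "Ar b"
  and b_dom [simp]: "dm b = KO C"
  and b_cod [simp]: "cd b = C"
  using b_hom by (simp_all add: hom_iff)

lemma c_b_reassoc [simp]: "Ar x \<Longrightarrow> cd x = KO C \<Longrightarrow> c \<cdot> b \<cdot> x = HA beta \<cdot> l C \<cdot> KA (tup c (ide C)) \<cdot> x"
  using comp_reassoc[OF c_b, of x] by simp

lemma H_beta_eta_reassoc: "Ar x \<Longrightarrow> cd x = HO C \<Longrightarrow> HA beta \<cdot> HA (eta C) \<cdot> x = x"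
  using H.map_comp_reassoc[of beta "eta C" "ide C" x] by simp

text \<open>Both \<open>\<langle>c \<cdot> \<beta> \<cdot> M f, \<beta> \<cdot> M f\<rangle>\<close> and \<open>\<langle>H(\<beta> \<cdot> M f) \<cdot> D, \<beta> \<cdot> M f\<rangle>\<close> are \<open>K\<close>-algebra homomorphisms from \<open>\<phi>\<close>
  into \<open>\<langle>H\<beta> \<cdot> l, b \<cdot> K\<pi>\<^sub>2\<rangle>\<close> (by the defining equation of \<open>b\<close>, resp. by naturality of \<open>l\<close> and
  \<open>\<beta> \<cdot> M\<beta> = \<beta> \<cdot> \<mu>\<close>), and they agree on generators.\<close>
lemma sharp_free_arr_coalgebra_hom:
  assumes Z: "Ob Z" and "is_gsos_extension Z d D"
    and f: "Ar f" "dm f = Z" "cd f = C" "c \<cdot> f = HA (beta \<cdot> Mf f) \<cdot> d"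
  shows "c \<cdot> (beta \<cdot> Mf f) = HA (beta \<cdot> Mf f) \<cdot> D"
proof -
  note D = gsos_extensionD[OF assms(2)]
  have d: "Ar d" "dm d = Z" "cd d = HO (M Z)"
    using D Z by (metis comp_arr comp_dom comp_cod eta_arr eta_cod eta_dom)+
  have c_f: "c \<cdot> f = HA beta \<cdot> HA (Mf f) \<cdot> d" using f d by simp
  let ?Q = "P (HO C) C"
  let ?alg = "tup (HA beta \<cdot> l C) (b \<cdot> KA (p2 (HO C) C))"
  let ?F = "beta \<cdot> Mf f"
  have alg: "Ar ?alg" "dm ?alg = KO ?Q" "cd ?alg = ?Q" by auto
  have F: "Ar ?F" "dm ?F = M Z" "cd ?F = C" using f by auto
  let ?u1 = "tup (c \<cdot> ?F) ?F" and ?u2 = "tup (HA ?F \<cdot> D) ?F"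
  have nat: "l C \<cdot> KA (tup (HA ?F \<cdot> D) (?F \<cdot> ide (M Z))) = HA (Mf ?F) \<cdot> l (M Z) \<cdot> KA (tup D (ide (M Z)))"
    by (rule l_natural_tuple) (use Z D F in auto)
  have beta_mu: "beta \<cdot> Mf beta \<cdot> Mf (Mf f) = beta \<cdot> Mf f \<cdot> mu Z"
    by (rule sharp_free_arr_mu) (use f in auto)
  have H_beta_mu: "HA beta \<cdot> HA (Mf beta) \<cdot> HA (Mf (Mf f)) \<cdot> x = HA beta \<cdot> HA (Mf f) \<cdot> HA (mu Z) \<cdot> x"
    if "Ar x" "cd x = HO (M (M Z))" for x
  proof -
    have "HA (beta \<cdot> Mf beta \<cdot> Mf (Mf f)) \<cdot> x = HA (beta \<cdot> Mf f \<cdot> mu Z) \<cdot> x"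
      using beta_mu by simp
    then show ?thesis using that Z f by simp
  qed
  have "?u1 = ?u2"
  proof (rule free_extension_unique[of Z ?alg ?Q])
    show "?u1 \<cdot> phi Z = ?alg \<cdot> KA ?u1" using Z f by simp
    have "?u2 \<cdot> phi Z = tup (HA beta \<cdot> HA (Mf f) \<cdot> HA (mu Z) \<cdot> l (M Z) \<cdot> KA (tup D (ide (M Z)))) (b \<cdot> KA beta \<cdot> KA (Mf f))"
      using Z f c_f d D by simp
    also have "\<dots> = ?alg \<cdot> KA ?u2"
    proof -
      have "HA beta \<cdot> l C \<cdot> KA (tup (HA ?F \<cdot> D) (?F \<cdot> ide (M Z))) =
          HA beta \<cdot> HA (Mf ?F) \<cdot> l (M Z) \<cdot> KA (tup D (ide (M Z)))"
        using nat by simp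
      also have "\<dots> = HA beta \<cdot> HA (Mf f) \<cdot> HA (mu Z) \<cdot> l (M Z) \<cdot> KA (tup D (ide (M Z)))"
        using Z f D H_beta_mu by simp
      finally show ?thesis using Z f c_f d D by simp
    qed
    finally show "?u2 \<cdot> phi Z = ?alg \<cdot> KA ?u2" .
    show "?u1 \<cdot> eta Z = ?u2 \<cdot> eta Z" using Z f c_f d D by simp
  qed (use Z f c_f d D in simp_all)
  then show ?thesis using tuple_eq_iff[of "c \<cdot> ?F" ?F "HA ?F \<cdot> D" ?F] Z f D by simp
qed

lemma coalgebra_hom_eq_sharp:
  assumes Y: "Ob Y" and w: "is_gsos_extension Y w0 w"
    and h: "Ar h" "dm h = M Y" "cd h = C" "c \<cdot> h = HA h \<cdot> w"
  shows "h = beta \<cdot> Mf (h \<cdot> eta Y)"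
proof -
  note w' = gsos_extensionD[OF w]
  let ?d2 = "HA (eta (M Y)) \<cdot> w"
  have d2: "Ar ?d2" "dm ?d2 = M Y" "cd ?d2 = HO (M (M Y))" using Y w' by auto
  obtain D2 where D2: "is_gsos_extension (M Y) ?d2 D2"
    using gsos_extension_exists[OF _ d2] Y by auto
  note D2' = gsos_extensionD[OF D2]
  have c_h: "c \<cdot> h \<cdot> x = HA h \<cdot> w \<cdot> x" if "Ar x" "cd x = M Y" for x
    using comp_reassoc[OF h(4), of x] that Y h w' by simp
  have h_mu: "h \<cdot> mu Y = beta \<cdot> Mf h"
  proof (rule coalgebra_hom_unique[of D2 "M (M Y)"])
    have "c \<cdot> h \<cdot> mu Y = HA h \<cdot> w \<cdot> mu Y" using c_h[of "mu Y"] Y by simp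
    then show "c \<cdot> (h \<cdot> mu Y) = HA (h \<cdot> mu Y) \<cdot> D2"
      using gsos_extension_mu[OF Y w D2] Y h w' D2' by simp
    have c_h_d2: "c \<cdot> h = HA (beta \<cdot> Mf h) \<cdot> ?d2"
    proof -
      have "HA beta \<cdot> HA (Mf h) \<cdot> HA (eta (M Y)) \<cdot> w = HA beta \<cdot> HA (eta C) \<cdot> HA h \<cdot> w"
        using H_free_arr_eta_reassoc[of h "M Y" w] h w' Y by simp
      also have "\<dots> = HA h \<cdot> w" using H_beta_eta_reassoc[of "HA h \<cdot> w"] h w' Y by simp
      finally show ?thesis using h Y w' by simp
    qed
    show "c \<cdot> (beta \<cdot> Mf h) = HA (beta \<cdot> Mf h) \<cdot> D2"
      using sharp_free_arr_coalgebra_hom[OF _ D2 h(1-3) c_h_d2] Y by simp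
  qed (use Y h D2' in simp_all)
  have "beta \<cdot> Mf h \<cdot> Mf (eta Y) = h \<cdot> mu Y \<cdot> Mf (eta Y)"
    using comp_reassoc[OF h_mu[symmetric], of "Mf (eta Y)"] Y h by simp
  also have "\<dots> = h" using Y h by (simp add: mu_free_arr_eta)
  finally show ?thesis using Y h by simp
qed

end

locale gsos_interpretation_coproducts =
  gsos_interpretation Ac P p1 p2 K M phi eta H l C c b + binary_coproducts Ac S i1 i2
  for Ac P p1 p2 K M phi eta H l C c b S i1 i2
begin

lemma cia_solution_iff:
  assumes X: "Ob X" and e: "Ar e" "dm e = X" "cd e = S (HO (M X)) C"
    and s: "Ar s" "dm s = X" "cd s = C"
  shows "s = cotup (cinv \<cdot> HA beta) (ide C) \<cdot> coprod_arr Ac S i1 i2 (HA (Mf s)) (ide C) \<cdot> e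
    \<longleftrightarrow> c \<cdot> s = cotup (HA beta \<cdot> HA (Mf s)) c \<cdot> e"
proof -
  have unfold: "cotup (cinv \<cdot> HA beta) (ide C) \<cdot> coprod_arr Ac S i1 i2 (HA (Mf s)) (ide C) \<cdot> e
     = cinv \<cdot> cotup (HA beta \<cdot> HA (Mf s)) c \<cdot> e"
    using X e s by (simp add: coprod_arr_def)
  have "c \<cdot> cinv \<cdot> cotup (HA beta \<cdot> HA (Mf s)) c \<cdot> e = cotup (HA beta \<cdot> HA (Mf s)) c \<cdot> e"
    using X e s by simp
  moreover have "cinv \<cdot> c \<cdot> s = s" using s by simp
  ultimately show ?thesis unfolding unfold by metis
qed

text \<open>A flat equation \<open>e : X \<rightarrow> HMX + C\<close> as an \<open>HM\<close>-coalgebra on \<open>X + C\<close>; the summand \<open>C\<close>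
  carries \<open>c\<close>, so that every solution \<open>s\<close> makes \<open>[s, id]\<close> a solution on generators.\<close>
definition flat_coalgebra where
  "flat_coalgebra X e =
     cotup (cotup (HA (Mf (i1 X C))) (HA (eta (S X C)) \<cdot> HA (i2 X C) \<cdot> c) \<cdot> e)
           (HA (eta (S X C)) \<cdot> HA (i2 X C) \<cdot> c)"

lemma flat_coalgebra_arr [simp]:
  assumes "Ob X" "Ar e" "dm e = X" "cd e = S (HO (M X)) C"
  shows "Ar (flat_coalgebra X e)" "dm (flat_coalgebra X e) = S X C"
    "cd (flat_coalgebra X e) = HO (M (S X C))"
  using assms by (simp_all add: flat_coalgebra_def)

lemma flat_solution_exists:
  assumes X: "Ob X" and e: "Ar e" "dm e = X" "cd e = S (HO (M X)) C"
    and w: "is_gsos_extension (S X C) (flat_coalgebra X e) w"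
    and h: "Ar h" "dm h = M (S X C)" "cd h = C" "c \<cdot> h = HA h \<cdot> w"
  defines "s \<equiv> h \<cdot> eta (S X C) \<cdot> i1 X C"
  shows "c \<cdot> s = cotup (HA beta \<cdot> HA (Mf s)) c \<cdot> e"
proof -
  let ?Y = "S X C" and ?inl = "i1 X C" and ?inr = "i2 X C"
  have Y: "Ob ?Y" using X by simp
  note w' = gsos_extensionD[OF w]
  have c_h: "c \<cdot> h \<cdot> x = HA h \<cdot> w \<cdot> x" if "Ar x" "cd x = M ?Y" for x
    using comp_reassoc[OF h(4), of x] that Y h w' by simp
  have w_eta: "w \<cdot> eta ?Y \<cdot> x = flat_coalgebra X e \<cdot> x" if "Ar x" "cd x = ?Y" for x
    using comp_reassoc[OF w'(4), of x] that X Y e w' by simp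
  have inr_ide: "h \<cdot> eta ?Y \<cdot> ?inr = ide C"
  proof (rule coalgebra_hom_unique[of c C])
    show "c \<cdot> (h \<cdot> eta ?Y \<cdot> ?inr) = HA (h \<cdot> eta ?Y \<cdot> ?inr) \<cdot> c"
      using c_h[of "eta ?Y \<cdot> ?inr"] w_eta[of ?inr] X Y h w' e by (simp add: flat_coalgebra_def)
  qed (use X Y h in simp_all)
  have h_inr: "HA h \<cdot> HA (eta ?Y) \<cdot> HA ?inr \<cdot> c = c"
    using arg_cong[OF inr_ide, of "\<lambda>z. HA z \<cdot> c"] X Y h by simp
  have h_sharp: "h = beta \<cdot> Mf (h \<cdot> eta ?Y)"
    by (rule coalgebra_hom_eq_sharp[OF Y w h])
  have h_inl: "HA h \<cdot> HA (Mf ?inl) = HA beta \<cdot> HA (Mf s)"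
    using arg_cong[OF h_sharp, of "\<lambda>z. HA z \<cdot> HA (Mf ?inl)"] X Y h unfolding s_def by simp
  show ?thesis
    using c_h[of "eta ?Y \<cdot> ?inl"] w_eta[of ?inl] X Y h w' e h_inl h_inr
    unfolding s_def by (simp add: flat_coalgebra_def)
qed

lemma flat_solution_unique:
  assumes X: "Ob X" and e: "Ar e" "dm e = X" "cd e = S (HO (M X)) C"
    and w: "is_gsos_extension (S X C) (flat_coalgebra X e) w"
    and h: "Ar h" "dm h = M (S X C)" "cd h = C" "c \<cdot> h = HA h \<cdot> w"
    and s: "Ar s" "dm s = X" "cd s = C" "c \<cdot> s = cotup (HA beta \<cdot> HA (Mf s)) c \<cdot> e"
  shows "s = h \<cdot> eta (S X C) \<cdot> i1 X C"
proof -
  let ?Y = "S X C" and ?inl = "i1 X C" and ?inr = "i2 X C"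
  have Y: "Ob ?Y" using X by simp
  note w' = gsos_extensionD[OF w]
  let ?f = "cotup s (ide C)"
  have f: "Ar ?f" "dm ?f = ?Y" "cd ?f = C" using s by auto
  have H_f_inl: "HA (Mf ?f) \<cdot> HA (Mf ?inl) = HA (Mf s)"
    using H.map_comp[of "Mf ?inl" "Mf ?f"] free_arr_comp[of ?inl ?f] X f s by simp
  have H_f_inr: "HA beta \<cdot> HA (Mf ?f) \<cdot> HA (eta ?Y) \<cdot> HA ?inr \<cdot> c = c"
  proof -
    have "HA beta \<cdot> HA (Mf ?f) \<cdot> HA (eta ?Y) \<cdot> HA ?inr \<cdot> c = HA beta \<cdot> HA (eta C) \<cdot> HA ?f \<cdot> HA ?inr \<cdot> c"
      using H_free_arr_eta_reassoc[of ?f ?Y "HA ?inr \<cdot> c"] X f by simp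
    also have "\<dots> = HA ?f \<cdot> HA ?inr \<cdot> c" using H_beta_eta_reassoc[of "HA ?f \<cdot> HA ?inr \<cdot> c"] X f by simp
    also have "\<dots> = HA (ide C) \<cdot> c" by (rule H.map_comp_reassoc) (use X s in simp_all)
    finally show ?thesis by simp
  qed
  have "c \<cdot> ?f = HA beta \<cdot> HA (Mf ?f) \<cdot> flat_coalgebra X e"
  proof (rule cotuple_ext[of _ _ X C])
    show "(c \<cdot> ?f) \<cdot> ?inl = (HA beta \<cdot> HA (Mf ?f) \<cdot> flat_coalgebra X e) \<cdot> ?inl"
      using X s f e H_f_inl H_f_inr by (simp add: flat_coalgebra_def)
    show "(c \<cdot> ?f) \<cdot> ?inr = (HA beta \<cdot> HA (Mf ?f) \<cdot> flat_coalgebra X e) \<cdot> ?inr"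
      using X s f e H_f_inl H_f_inr by (simp add: flat_coalgebra_def)
  qed (use X s f e in simp_all)
  then have f_hom: "c \<cdot> (beta \<cdot> Mf ?f) = HA (beta \<cdot> Mf ?f) \<cdot> w"
    using sharp_free_arr_coalgebra_hom[OF Y w f] X Y e f w' by simp
  have f_h: "beta \<cdot> Mf ?f = h"
    by (rule coalgebra_hom_unique[OF _ _ _ _ _ _ _ _ _ f_hom h(4)]) (use Y w' f h in simp_all)
  have "h \<cdot> eta ?Y \<cdot> ?inl = beta \<cdot> Mf ?f \<cdot> eta ?Y \<cdot> ?inl"
    using arg_cong[OF f_h, of "\<lambda>z. z \<cdot> eta ?Y \<cdot> ?inl"] X Y f h by simp
  also have "\<dots> = s" using X Y f s by simp
  finally show ?thesis by simp
qed

lemma HM_algebra_is_cia: "is_cia Ac S i1 i2 (HM_functor Ac H K M phi eta) C (cinv \<cdot> HA beta)"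
proof -
  have "\<exists>!s. s \<in> hom Ac X C \<and>
          s = cotup (cinv \<cdot> HA beta) (ide C) \<cdot> coprod_arr Ac S i1 i2 (HA (Mf s)) (ide C) \<cdot> e"
    if X: "Ob X" and "e \<in> hom Ac X (S (HO (M X)) C)" for X e
  proof -
    have e: "Ar e" "dm e = X" "cd e = S (HO (M X)) C" using that by (auto simp: hom_iff)
    obtain w where w: "is_gsos_extension (S X C) (flat_coalgebra X e) w"
      using gsos_extension_exists[of "S X C" "flat_coalgebra X e"] X e by auto
    note w' = gsos_extensionD[OF w]
    obtain h where h: "Ar h" "dm h = M (S X C)" "cd h = C" "c \<cdot> h = HA h \<cdot> w"
      using coalgebra_hom_exists[OF w'(1-3)] by blast
    show ?thesis
    proof (rule ex1I)
      let ?s = "h \<cdot> eta (S X C) \<cdot> i1 X C"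
      have "Ar ?s" "dm ?s = X" "cd ?s = C" using X h by simp_all
      with flat_solution_exists[OF X e w h] cia_solution_iff[OF X e]
      show "?s \<in> hom Ac X C \<and>
          ?s = cotup (cinv \<cdot> HA beta) (ide C) \<cdot> coprod_arr Ac S i1 i2 (HA (Mf ?s)) (ide C) \<cdot> e"
        by (simp add: hom_iff)
    next
      fix s
      assume "s \<in> hom Ac X C \<and>
          s = cotup (cinv \<cdot> HA beta) (ide C) \<cdot> coprod_arr Ac S i1 i2 (HA (Mf s)) (ide C) \<cdot> e"
      then have s: "Ar s" "dm s = X" "cd s = C"
        and "s = cotup (cinv \<cdot> HA beta) (ide C) \<cdot> coprod_arr Ac S i1 i2 (HA (Mf s)) (ide C) \<cdot> e"
        by (auto simp: hom_iff)
      with cia_solution_iff[OF X e s] have "c \<cdot> s = cotup (HA beta \<cdot> HA (Mf s)) c \<cdot> e"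
        by blast
      then show "s = h \<cdot> eta (S X C) \<cdot> i1 X C"
        by (rule flat_solution_unique[OF X e w h s])
    qed
  qed
  moreover have "cinv \<cdot> HA beta \<in> hom Ac (HO (M C)) C" by (simp add: hom_iff)
  ultimately show ?thesis unfolding is_cia_def HM_functor_def by simp
qed

end

theorem mainTheorem2:
  fixes Ac :: "('o, 'm) category"
    and P :: "'o \<Rightarrow> 'o \<Rightarrow> 'o" and p1 p2 :: "'o \<Rightarrow> 'o \<Rightarrow> 'm"
    and S :: "'o \<Rightarrow> 'o \<Rightarrow> 'o" and i1 i2 :: "'o \<Rightarrow> 'o \<Rightarrow> 'm"
    and H K :: "('o, 'm) endofunctor"
    and C :: 'o and c :: 'm
    and M :: "'o \<Rightarrow> 'o" and phi eta :: "'o \<Rightarrow> 'm"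
    and l :: "'o \<Rightarrow> 'm" and b :: 'm
  assumes "is_category Ac"
    and "has_binary_products Ac P p1 p2"
    and "has_binary_coproducts Ac S i1 i2"
    and "is_endofunctor Ac H"
    and "is_endofunctor Ac K"
    and "is_terminal_coalgebra Ac H C c"
    and "has_free_algebras Ac K M phi eta"
    and "is_GSOS_rule Ac P p1 p2 H K M phi eta l"
    and "is_l_interpretation Ac P p1 p2 H K M phi eta l C c b"
  shows "is_cia Ac S i1 i2 (HM_functor Ac H K M phi eta) C
           (Comp Ac (inverse_arr Ac c) (FArr H (sharp Ac K M phi eta b)))"
proof -
  interpret gsos_interpretation_coproducts Ac P p1 p2 K M phi eta H l C c b S i1 i2
    by unfold_locales (fact assms)+
  show ?thesis using HM_algebra_is_cia unfolding cinv_def .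
qed

end
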